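(* Let $V:S^2\to\mathbb R$ be smooth and let $\nabla V$ denote the Euclidean gradient of some smooth extension of $V$ to a neighbourhood of $S^2$ in $\mathbb R^3$. A smooth curve $\vec n:[0,T]\to S^2$ is a quantum Riemannian cubic with obstacle avoidance (for the potential $V$) if it satisfies, for all $t\in[0,T]$, $$P(\vec n)\Big(\ddddot{\vec n}+2\|\dot{\vec n}\|^2\ddot{\vec n}+4(\dot{\vec n}\cdot\ddot{\vec n})\,\dot{\vec n}+\|\ddot{\vec n}\|^2\vec n+\nabla V(\vec n)\Big)=0 .$$
   Context: $S^2\subset\mathbb R^3$ is the unit sphere with the round metric (induced by the Euclidean inner product "$\cdot$"); $D_t$ denotes the Levi--Civita covariant derivative along a curve. For $\vec n\in S^2$, $P(\vec n)=I-\vec n\vec n^\top$ is the orthogonal projector of $\mathbb R^3$ onto $T_{\vec n}S^2$. For a smooth $V:S^2\to\mathbb R$, consider the action $$J[\vec n]=\int_0^T\Big[\tfrac12\|D_t\dot{\vec n}(t)\|^2+V(\vec n(t))\Big]dt .$$ A curve $\vec n:[0,T]\to S^2$ is called a quantum Riemannian cubic with obstacle avoidance if it is a critical point of $J$ under (smooth) variations that fix both $(\vec n(0),\dot{\vec n}(0))$ and $(\vec n(T),\dot{\vec n}(T))$. *)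

theory Defs
  imports "HOL-Analysis.Analysis"
begin

(* C^k regularity on a set U (meant for open U): continuous, and for k+1 additionally
   differentiable with all partial derivatives of class C^k *)
fun Ck_on :: "nat \<Rightarrow> 'a::euclidean_space set \<Rightarrow> ('a \<Rightarrow> 'b::real_normed_vector) \<Rightarrow> bool" where
  "Ck_on 0 U f = continuous_on U f"
| "Ck_on (Suc k) U f =
     (continuous_on U f \<and> (\<forall>x\<in>U. f differentiable (at x)) \<and>
      (\<forall>b\<in>Basis. Ck_on k U (\<lambda>x. frechet_derivative f (at x) b)))"

definition smooth_on :: "'a::euclidean_space set \<Rightarrow> ('a \<Rightarrow> 'b::real_normed_vector) \<Rightarrow> bool" where
  "smooth_on U f \<longleftrightarrow> (\<forall>k. Ck_on k U f)"

fun vderiv :: "real \<Rightarrow> nat \<Rightarrow> (real \<Rightarrow> 'a::real_normed_vector) \<Rightarrow> real \<Rightarrow> 'a" where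
  "vderiv T 0 f = f"
| "vderiv T (Suc k) f = (\<lambda>t. vector_derivative (vderiv T k f) (at t within {0..T}))"

definition smooth_curve :: "real \<Rightarrow> (real \<Rightarrow> 'a::real_normed_vector) \<Rightarrow> bool" where
  "smooth_curve T f \<longleftrightarrow>
     (\<forall>k. \<forall>t\<in>{0..T}. (vderiv T k f has_vector_derivative vderiv T (Suc k) f t) (at t within {0..T}))"

definition proj :: "real^3 \<Rightarrow> real^3 \<Rightarrow> real^3" where
  "proj n w = w - (n \<bullet> w) *\<^sub>R n"

(* the action J[n]; the covariant acceleration on S^2 is D_t n' = P(n) n'' *)
definition action :: "(real^3 \<Rightarrow> real) \<Rightarrow> real \<Rightarrow> (real \<Rightarrow> real^3) \<Rightarrow> real" where
  "action V T n = integral {0..T}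
     (\<lambda>t. (1/2) * (norm (proj (n t) (vderiv T 2 n t)))\<^sup>2 + V (n t))"

(* quantum Riemannian cubic with obstacle avoidance: a smooth curve on S^2 that is a
   critical point of J under all smooth variations fixing endpoints and endpoint velocities *)
definition qrc_oa :: "(real^3 \<Rightarrow> real) \<Rightarrow> real \<Rightarrow> (real \<Rightarrow> real^3) \<Rightarrow> bool" where
  "qrc_oa V T n \<longleftrightarrow>
     smooth_curve T n \<and> (\<forall>t\<in>{0..T}. n t \<in> sphere 0 1) \<and>
     (\<forall>(H :: real \<times> real \<Rightarrow> real^3) W e.
        open W \<and> e > 0 \<and> {-e<..<e} \<times> {0..T} \<subseteq> W \<and> smooth_on W H \<and>
        (\<forall>s\<in>{-e<..<e}. \<forall>t\<in>{0..T}. H (s, t) \<in> sphere 0 1) \<and>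
        (\<forall>t\<in>{0..T}. H (0, t) = n t) \<and>
        (\<forall>s\<in>{-e<..<e}. H (s, 0) = n 0 \<and> H (s, T) = n T \<and>
            vderiv T 1 (\<lambda>t. H (s, t)) 0 = vderiv T 1 n 0 \<and>
            vderiv T 1 (\<lambda>t. H (s, t)) T = vderiv T 1 n T)
        \<longrightarrow> ((\<lambda>s. action V T (\<lambda>t. H (s, t))) has_real_derivative 0) (at 0))"

end

theory Submission
  imports Defs
begin

(* Let H(s,t) be an admissible variation of n through curves on the sphere, with variation
   field y = d/ds H at s = 0. Differentiating under the integral sign, the first variation of J
   is the integral of  P(n) n'' . d/ds (P(H) H_tt) + grad V(n) . y.  The constraint |n| = 1 gives
   n . n' = 0 and |n'|^2 + n . n'' = 0, and also y . n = 0; with these and the Euler-Lagrange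
   equation the integrand becomes  A . y'' - A'' . y  for  A = n'' + |n'|^2 n.  Two integrations
   by parts reduce its integral to the boundary term [A . y' - A' . y], which vanishes because
   fixing the endpoints and the endpoint velocities forces y = 0 and y' = d/dt d/ds H = 0 there
   (the mixed partial derivatives of the smooth map H commute). *)

section \<open>Derivatives along curves\<close>

lemma has_vector_derivative_frechet_derivative_compose:
  assumes "g differentiable (at (c t))" and "(c has_vector_derivative c') (at t within S)"
  shows "((\<lambda>\<tau>. g (c \<tau>)) has_vector_derivative frechet_derivative g (at (c t)) c') (at t within S)"
proof -
  let ?D = "frechet_derivative g (at (c t))"
  have D: "(g has_derivative ?D) (at (c t))"
    using assms(1) frechet_derivative_works by blast
  have "((\<lambda>\<tau>. g (c \<tau>)) has_derivative (\<lambda>h. ?D (h *\<^sub>R c'))) (at t within S)"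
    using diff_chain_within[OF assms(2)[unfolded has_vector_derivative_def] has_derivative_at_withinI[OF D]]
    by (simp add: o_def)
  moreover have "?D (h *\<^sub>R c') = h *\<^sub>R ?D c'" for h
    using linear_scale[OF has_derivative_linear[OF D]] .
  ultimately show ?thesis
    unfolding has_vector_derivative_def by simp
qed

lemma has_real_derivative_inner [derivative_intros]:
  assumes "(f has_vector_derivative f') (at x within S)" and "(g has_vector_derivative g') (at x within S)"
  shows "((\<lambda>x. f x \<bullet> g x) has_real_derivative (f' \<bullet> g x + f x \<bullet> g')) (at x within S)"
  unfolding has_field_derivative_def
  by (rule has_derivative_eq_rhs[OF has_derivative_inner[OF assms[unfolded has_vector_derivative_def]]])
     (auto simp: fun_eq_iff algebra_simps inner_commute)

lemma has_real_derivative_compose_gradient: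
  assumes "(V has_derivative (\<lambda>h. G \<bullet> h)) (at (c t))" and "(c has_vector_derivative c') (at t within S)"
  shows "((\<lambda>t. V (c t)) has_real_derivative (G \<bullet> c')) (at t within S)"
  unfolding has_field_derivative_def
  by (rule has_derivative_eq_rhs[OF diff_chain_within[OF assms(2)[unfolded has_vector_derivative_def]
      has_derivative_at_withinI[OF assms(1)], unfolded o_def]]) (auto simp: fun_eq_iff)

lemma has_real_derivative_const_on_interval_eq_0:
  fixes \<phi> :: "real \<Rightarrow> real"
  assumes "a < b" and "t \<in> {a..b}" and "\<And>\<tau>. \<tau> \<in> {a..b} \<Longrightarrow> \<phi> \<tau> = c"
    and "(\<phi> has_real_derivative D) (at t within {a..b})"
  shows "D = 0"
proof -
  have "((\<lambda>_. c) has_vector_derivative D) (at t within {a..b})"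
    using has_vector_derivative_transform assms(2-4)
    unfolding has_real_derivative_iff_has_vector_derivative by metis
  then show ?thesis
    using vector_derivative_unique_within_closed_interval[of a b t "\<lambda>_. c" D 0] assms(1,2) by auto
qed

lemma unit_curve_inner_derivatives:
  fixes N :: "nat \<Rightarrow> real \<Rightarrow> 'a::real_inner"
  assumes ab: "a < b"
    and N: "\<And>k t. t \<in> {a..b} \<Longrightarrow> (N k has_vector_derivative N (Suc k) t) (at t within {a..b})"
    and unit: "\<And>t. t \<in> {a..b} \<Longrightarrow> N 0 t \<bullet> N 0 t = 1" and t: "t \<in> {a..b}"
  shows "N 0 t \<bullet> N 1 t = 0" and "N 1 t \<bullet> N 1 t + N 0 t \<bullet> N 2 t = 0"
proof -
  have orth: "N 0 \<tau> \<bullet> N 1 \<tau> = 0" if \<tau>: "\<tau> \<in> {a..b}" for \<tau>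
  proof -
    have "((\<lambda>t. N 0 t \<bullet> N 0 t) has_real_derivative N 1 \<tau> \<bullet> N 0 \<tau> + N 0 \<tau> \<bullet> N 1 \<tau>) (at \<tau> within {a..b})"
      using has_real_derivative_inner[OF N[OF \<tau>, of 0] N[OF \<tau>, of 0]] by simp
    from has_real_derivative_const_on_interval_eq_0[OF ab \<tau> unit this]
    have "N 1 \<tau> \<bullet> N 0 \<tau> + N 0 \<tau> \<bullet> N 1 \<tau> = 0" .
    then show ?thesis
      by (simp add: inner_commute)
  qed
  then show "N 0 t \<bullet> N 1 t = 0"
    using t .
  have "((\<lambda>t. N 0 t \<bullet> N 1 t) has_real_derivative N 1 t \<bullet> N 1 t + N 0 t \<bullet> N 2 t) (at t within {a..b})"
    using has_real_derivative_inner[OF N[OF t, of 0] N[OF t, of 1]] by (simp add: numeral_2_eq_2)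
  from has_real_derivative_const_on_interval_eq_0[OF ab t orth this]
  show "N 1 t \<bullet> N 1 t + N 0 t \<bullet> N 2 t = 0" .
qed

lemma has_integral_inner_second_derivatives:
  fixes f g :: "real \<Rightarrow> 'a::real_inner"
  assumes "a \<le> b"
    and f: "\<And>t. t \<in> {a..b} \<Longrightarrow> (f has_vector_derivative f1 t) (at t within {a..b})"
      "\<And>t. t \<in> {a..b} \<Longrightarrow> (f1 has_vector_derivative f2 t) (at t within {a..b})"
    and g: "\<And>t. t \<in> {a..b} \<Longrightarrow> (g has_vector_derivative g1 t) (at t within {a..b})"
      "\<And>t. t \<in> {a..b} \<Longrightarrow> (g1 has_vector_derivative g2 t) (at t within {a..b})"
  shows "((\<lambda>t. f t \<bullet> g2 t - f2 t \<bullet> g t) has_integral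
           (f b \<bullet> g1 b - f1 b \<bullet> g b) - (f a \<bullet> g1 a - f1 a \<bullet> g a)) {a..b}"
proof (rule fundamental_theorem_of_calculus[OF assms(1)])
  fix t assume t: "t \<in> {a..b}"
  have "((\<lambda>t. f t \<bullet> g1 t - f1 t \<bullet> g t) has_real_derivative
      (f1 t \<bullet> g1 t + f t \<bullet> g2 t) - (f2 t \<bullet> g t + f1 t \<bullet> g1 t)) (at t within {a..b})"
    by (rule DERIV_diff[OF has_real_derivative_inner[OF f(1) g(2)] has_real_derivative_inner[OF f(2) g(1)]])
       (use t in simp_all)
  then show "((\<lambda>t. f t \<bullet> g1 t - f1 t \<bullet> g t) has_vector_derivative f t \<bullet> g2 t - f2 t \<bullet> g t)
      (at t within {a..b})"
    by (simp add: has_real_derivative_iff_has_vector_derivative[symmetric])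
qed

(* If N k is the k-th derivative of a curve on the unit sphere, then N 2 + |N 1|^2 N 0 = P(N 0) (N 2)
   is its covariant acceleration. *)
lemma has_vector_derivative_covariant_acceleration:
  fixes N :: "nat \<Rightarrow> real \<Rightarrow> 'a::real_inner"
  assumes N: "\<And>k. (N k has_vector_derivative N (Suc k) t) (at t within S)"
  shows "((\<lambda>t. N 2 t + (N 1 t \<bullet> N 1 t) *\<^sub>R N 0 t) has_vector_derivative
          N 3 t + (2 * (N 1 t \<bullet> N 2 t)) *\<^sub>R N 0 t + (N 1 t \<bullet> N 1 t) *\<^sub>R N 1 t) (at t within S)"
    and "((\<lambda>t. N 3 t + (2 * (N 1 t \<bullet> N 2 t)) *\<^sub>R N 0 t + (N 1 t \<bullet> N 1 t) *\<^sub>R N 1 t) has_vector_derivative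
          N 4 t + (2 * (N 2 t \<bullet> N 2 t + N 1 t \<bullet> N 3 t)) *\<^sub>R N 0 t
          + (4 * (N 1 t \<bullet> N 2 t)) *\<^sub>R N 1 t + (N 1 t \<bullet> N 1 t) *\<^sub>R N 2 t) (at t within S)"
  by (rule has_vector_derivative_eq_rhs, (rule derivative_intros N)+;
      simp add: numeral_eq_Suc inner_commute algebra_simps flip: scaleR_left_distrib)+

section \<open>Smooth maps and their partial derivatives\<close>

lemma Ck_on_imp_continuous_on: "Ck_on k U f \<Longrightarrow> continuous_on U f"
  by (cases k) auto

lemma smooth_on_imp_continuous_on: "smooth_on U f \<Longrightarrow> continuous_on U f"
  unfolding smooth_on_def using Ck_on_imp_continuous_on by blast

lemma smooth_on_imp_differentiable: "smooth_on U f \<Longrightarrow> x \<in> U \<Longrightarrow> f differentiable (at x)"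
  unfolding smooth_on_def by (metis Ck_on.simps(2))

lemma smooth_on_frechet_derivative:
  "smooth_on U f \<Longrightarrow> b \<in> Basis \<Longrightarrow> smooth_on U (\<lambda>x. frechet_derivative f (at x) b)"
  unfolding smooth_on_def by (metis Ck_on.simps(2))

lemma continuous_on_gradient:
  fixes V :: "'a::euclidean_space \<Rightarrow> real"
  assumes "smooth_on U V" and "\<And>x. x \<in> U \<Longrightarrow> (V has_derivative (\<lambda>h. gradV x \<bullet> h)) (at x)"
  shows "continuous_on U gradV"
proof -
  have coord: "continuous_on U (\<lambda>x. gradV x \<bullet> b)" if "b \<in> Basis" for b
  proof -
    have "continuous_on U (\<lambda>x. frechet_derivative V (at x) b)"
      using smooth_on_imp_continuous_on[OF smooth_on_frechet_derivative[OF assms(1) that]] .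
    moreover have "frechet_derivative V (at x) b = gradV x \<bullet> b" if "x \<in> U" for x
      using frechet_derivative_at[OF assms(2)[OF that]] by simp
    ultimately show ?thesis
      using continuous_on_cong by force
  qed
  have "continuous_on U (\<lambda>x. \<Sum>b\<in>Basis. (gradV x \<bullet> b) *\<^sub>R b)"
    by (intro continuous_intros coord)
  then show ?thesis
    by (simp add: euclidean_representation)
qed

definition partial_s :: "(real \<times> real \<Rightarrow> 'c::real_normed_vector) \<Rightarrow> real \<times> real \<Rightarrow> 'c" where
  "partial_s g z = frechet_derivative g (at z) (1, 0)"

definition partial_t :: "(real \<times> real \<Rightarrow> 'c::real_normed_vector) \<Rightarrow> real \<times> real \<Rightarrow> 'c" where
  "partial_t g z = frechet_derivative g (at z) (0, 1)"

lemma smooth_on_partial_s: "smooth_on U g \<Longrightarrow> smooth_on U (partial_s g)"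
  unfolding partial_s_def[abs_def] by (rule smooth_on_frechet_derivative) (auto simp: Basis_prod_def)

lemma smooth_on_partial_t: "smooth_on U g \<Longrightarrow> smooth_on U (partial_t g)"
  unfolding partial_t_def[abs_def] by (rule smooth_on_frechet_derivative) (auto simp: Basis_prod_def)

lemma smooth_on_partial_t_iterate: "smooth_on U g \<Longrightarrow> smooth_on U ((partial_t ^^ k) g)"
  by (induction k) (auto intro: smooth_on_partial_t)

lemma has_vector_derivative_partial_s:
  "g differentiable (at (s, t)) \<Longrightarrow>
    ((\<lambda>\<sigma>. g (\<sigma>, t)) has_vector_derivative partial_s g (s, t)) (at s within S)"
  unfolding partial_s_def
  by (rule has_vector_derivative_frechet_derivative_compose) (auto intro!: derivative_intros)

lemma has_vector_derivative_partial_t: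
  "g differentiable (at (s, t)) \<Longrightarrow>
    ((\<lambda>\<tau>. g (s, \<tau>)) has_vector_derivative partial_t g (s, t)) (at t within S)"
  unfolding partial_t_def
  by (rule has_vector_derivative_frechet_derivative_compose) (auto intro!: derivative_intros)

lemma has_vector_derivative_partial_t_iterate:
  assumes "smooth_on W g" and "(s, t) \<in> W"
  shows "((\<lambda>\<tau>. (partial_t ^^ k) g (s, \<tau>)) has_vector_derivative (partial_t ^^ Suc k) g (s, t)) (at t within S)"
  using has_vector_derivative_partial_t[OF smooth_on_imp_differentiable[OF smooth_on_partial_t_iterate[OF assms(1)]
        assms(2)]]
  by simp

lemma open_contains_ball_times_cball:
  fixes s :: "'a::metric_space" and t :: "'b::metric_space"
  assumes "open W" and "(s, t) \<in> W"
  obtains r d where "r > 0" "d > 0" "ball s r \<times> cball t d \<subseteq> W"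
proof -
  obtain A B where AB: "open A" "open B" "(s, t) \<in> A \<times> B" "A \<times> B \<subseteq> W"
    by (rule open_prod_elim[OF assms])
  have "s \<in> A" "t \<in> B"
    using AB(3) by auto
  obtain r where r: "r > 0" "ball s r \<subseteq> A"
    using openE[OF AB(1) \<open>s \<in> A\<close>] .
  obtain d where d: "d > 0" "cball t d \<subseteq> B"
    using open_contains_cball_eq[OF AB(2)] \<open>t \<in> B\<close> by blast
  show ?thesis
    by (rule that[OF r(1) d(1) order_trans[OF Sigma_mono[OF r(2) d(2)] AB(4)]])
qed

lemma partial_s_eq_integral_partial_s_partial_t:
  fixes g :: "real \<times> real \<Rightarrow> 'c::banach"
  assumes g: "smooth_on W g" and S: "open S" "convex S" "s \<in> S" and SW: "S \<times> {a..b} \<subseteq> W"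
    and \<tau>: "\<tau> \<in> {a..b}"
  shows "partial_s g (s, \<tau>) = partial_s g (s, a) + integral {a..\<tau>} (\<lambda>u. partial_s (partial_t g) (s, u))"
proof -
  have gt: "smooth_on W (partial_t g)" and gst: "smooth_on W (partial_s (partial_t g))"
    using g by (auto intro: smooth_on_partial_s smooth_on_partial_t)
  have sub: "S \<times> {a..\<tau>} \<subseteq> W"
    using SW \<tau> by auto
  have ftc: "g (\<sigma>, a) + integral {a..\<tau>} (\<lambda>u. partial_t g (\<sigma>, u)) = g (\<sigma>, \<tau>)" if "\<sigma> \<in> S" for \<sigma>
  proof -
    have "((\<lambda>u. partial_t g (\<sigma>, u)) has_integral (g (\<sigma>, \<tau>) - g (\<sigma>, a))) {a..\<tau>}"
      using \<tau> sub that
      by (intro fundamental_theorem_of_calculus has_vector_derivative_partial_t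
          smooth_on_imp_differentiable[OF g]) auto
    then show ?thesis
      by (simp add: integral_unique)
  qed
  have "((\<lambda>\<sigma>. integral (cbox a \<tau>) (\<lambda>u. partial_t g (\<sigma>, u))) has_vector_derivative
          integral (cbox a \<tau>) (\<lambda>u. partial_s (partial_t g) (s, u))) (at s within S)"
  proof (rule leibniz_rule_vector_derivative)
    show "((\<lambda>\<sigma>. partial_t g (\<sigma>, u)) has_vector_derivative partial_s (partial_t g) (\<sigma>, u)) (at \<sigma> within S)"
      if "\<sigma> \<in> S" "u \<in> cbox a \<tau>" for \<sigma> u
      using that sub
      by (intro has_vector_derivative_partial_s smooth_on_imp_differentiable[OF gt]) auto
    show "(\<lambda>u. partial_t g (\<sigma>, u)) integrable_on cbox a \<tau>" if "\<sigma> \<in> S" for \<sigma>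
      using that sub
      by (intro integrable_continuous continuous_on_compose2[OF smooth_on_imp_continuous_on[OF gt]])
         (auto intro!: continuous_intros)
    show "continuous_on (S \<times> cbox a \<tau>) (\<lambda>(\<sigma>, u). partial_s (partial_t g) (\<sigma>, u))"
      using sub by (auto intro: continuous_on_subset[OF smooth_on_imp_continuous_on[OF gst]])
  qed (use S in auto)
  moreover have "g differentiable (at (s, a))"
    using S SW \<tau> by (intro smooth_on_imp_differentiable[OF g]) auto
  ultimately have "((\<lambda>\<sigma>. g (\<sigma>, a) + integral {a..\<tau>} (\<lambda>u. partial_t g (\<sigma>, u))) has_vector_derivative
      partial_s g (s, a) + integral {a..\<tau>} (\<lambda>u. partial_s (partial_t g) (s, u))) (at s)"
    using has_vector_derivative_add[OF has_vector_derivative_partial_s] at_within_open[OF S(3,1)]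
    by fastforce
  moreover have "((\<lambda>\<sigma>. g (\<sigma>, a) + integral {a..\<tau>} (\<lambda>u. partial_t g (\<sigma>, u))) has_vector_derivative
      partial_s g (s, \<tau>)) (at s)"
  proof (rule has_vector_derivative_transform_within_open[OF _ S(1,3)])
    show "((\<lambda>\<sigma>. g (\<sigma>, \<tau>)) has_vector_derivative partial_s g (s, \<tau>)) (at s)"
      using S SW \<tau> by (intro has_vector_derivative_partial_s smooth_on_imp_differentiable[OF g]) auto
  qed (use ftc in auto)
  ultimately show ?thesis
    using vector_derivative_unique_at by blast
qed

lemma partial_s_partial_t_commute:
  fixes g :: "real \<times> real \<Rightarrow> 'c::banach"
  assumes g: "smooth_on W g" and W: "open W" "(s, t) \<in> W"
  shows "partial_s (partial_t g) (s, t) = partial_t (partial_s g) (s, t)"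
proof -
  obtain r d where rd: "r > 0" "d > 0" "ball s r \<times> cball t d \<subseteq> W"
    using open_contains_ball_times_cball[OF W] .
  define J where "J = {t - d..t + d}"
  have SJ: "ball s r \<times> J \<subseteq> W"
    using rd(3) unfolding J_def cball_eq_atLeastAtMost .
  have t: "t \<in> J" and s: "s \<in> ball s r"
    using rd unfolding J_def by auto
  \<comment> \<open>both sides are the derivative at t of this integral representation of partial_s g (s, -)\<close>
  let ?F = "\<lambda>\<tau>. partial_s g (s, t - d) + integral {t - d..\<tau>} (\<lambda>u. partial_s (partial_t g) (s, u))"
  have "continuous_on J (\<lambda>u. (s, u))" and "(\<lambda>u. (s, u)) ` J \<subseteq> W"
    using SJ s by (auto intro: continuous_on_Pair continuous_on_const continuous_on_id)
  then have "continuous_on J (\<lambda>u. partial_s (partial_t g) (s, u))"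
    by (rule continuous_on_compose2[OF smooth_on_imp_continuous_on[OF smooth_on_partial_s[OF
          smooth_on_partial_t[OF g]]]])
  then have "((\<lambda>\<tau>. integral {t - d..\<tau>} (\<lambda>u. partial_s (partial_t g) (s, u))) has_vector_derivative
      partial_s (partial_t g) (s, t)) (at t within J)"
    using t unfolding J_def by (rule integral_has_vector_derivative)
  from has_vector_derivative_add[OF has_vector_derivative_const this]
  have F1: "(?F has_vector_derivative partial_s (partial_t g) (s, t)) (at t within J)"
    by simp
  have F2: "(?F has_vector_derivative partial_t (partial_s g) (s, t)) (at t within J)"
  proof (rule has_vector_derivative_transform[OF t])
    show "((\<lambda>\<tau>. partial_s g (s, \<tau>)) has_vector_derivative partial_t (partial_s g) (s, t)) (at t within J)"
      using smooth_on_imp_differentiable[OF smooth_on_partial_s[OF g] W(2)]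
      by (rule has_vector_derivative_partial_t)
    show "?F \<tau> = partial_s g (s, \<tau>)" if "\<tau> \<in> J" for \<tau>
      using partial_s_eq_integral_partial_s_partial_t[OF g open_ball convex_ball s SJ[unfolded J_def]
          that[unfolded J_def]] by (rule sym)
  qed
  have "t - d < t + d" "t \<in> cbox (t - d) (t + d)"
    unfolding cbox_interval using rd by auto
  from vector_derivative_unique_within_closed_interval[OF this F1[unfolded J_def, folded cbox_interval]
      F2[unfolded J_def, folded cbox_interval]]
  show ?thesis .
qed

lemma partial_s_partial_t_partial_t_commute:
  fixes g :: "real \<times> real \<Rightarrow> 'c::banach"
  assumes g: "smooth_on W g" and W: "open W" "z \<in> W"
  shows "partial_s (partial_t (partial_t g)) z = partial_t (partial_t (partial_s g)) z"
proof -
  obtain s t where z: "z = (s, t)"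
    by fastforce
  have "partial_s (partial_t (partial_t g)) z = partial_t (partial_s (partial_t g)) z"
    using partial_s_partial_t_commute[OF smooth_on_partial_t[OF g] W(1)] W(2) z by simp
  also have "\<dots> = partial_t (partial_t (partial_s g)) z"
  proof -
    have "partial_s (partial_t g) y = partial_t (partial_s g) y" if "y \<in> W" for y
      using partial_s_partial_t_commute[OF g W(1)] that by (cases y) simp
    then have "frechet_derivative (partial_s (partial_t g)) (at z) =
        frechet_derivative (partial_t (partial_s g)) (at z)"
      by (rule frechet_derivative_transform_within_open[OF smooth_on_imp_differentiable[OF
            smooth_on_partial_s[OF smooth_on_partial_t[OF g]] W(2)] W])
    then show ?thesis
      by (simp add: partial_t_def[of "partial_s (partial_t g)"] partial_t_def[of "partial_t (partial_s g)"])
  qed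
  finally show ?thesis .
qed

lemma partial_s_eq_0_if_const:
  assumes "g differentiable (at (s, t))" and "open S" "s \<in> S" and "\<And>\<sigma>. \<sigma> \<in> S \<Longrightarrow> g (\<sigma>, t) = c"
  shows "partial_s g (s, t) = 0"
proof -
  have "((\<lambda>\<sigma>. g (\<sigma>, t)) has_vector_derivative 0) (at s)"
    using assms by (rule_tac has_vector_derivative_transform_within_open[of "\<lambda>_. c" _ _ S]) auto
  then show ?thesis
    using vector_derivative_unique_at has_vector_derivative_partial_s[OF assms(1)] by blast
qed

lemma inner_partial_s_eq_0_if_unit:
  assumes "g differentiable (at (s, t))" and "open S" "s \<in> S"
    and "\<And>\<sigma>. \<sigma> \<in> S \<Longrightarrow> g (\<sigma>, t) \<bullet> g (\<sigma>, t) = 1"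
  shows "g (s, t) \<bullet> partial_s g (s, t) = 0"
proof -
  note dg = has_vector_derivative_partial_s[OF assms(1), of UNIV]
  have "((\<lambda>\<sigma>. g (\<sigma>, t) \<bullet> g (\<sigma>, t)) has_real_derivative 0) (at s)"
    using assms(2-4) by (rule_tac has_field_derivative_transform_within_open[of "\<lambda>_. 1" _ _ S]) auto
  with has_real_derivative_inner[OF dg dg] have "partial_s g (s, t) \<bullet> g (s, t) + g (s, t) \<bullet> partial_s g (s, t) = 0"
    using DERIV_unique by blast
  then show ?thesis
    by (simp add: inner_commute)
qed

lemma vderiv_eq_partial_t_iterate:
  fixes g :: "real \<times> real \<Rightarrow> 'c::real_normed_vector"
  assumes g: "smooth_on W g" and T: "T > 0" and W: "{s} \<times> {0..T} \<subseteq> W"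
    and f: "\<And>t. t \<in> {0..T} \<Longrightarrow> f t = g (s, t)" and t: "t \<in> {0..T}"
  shows "vderiv T k f t = (partial_t ^^ k) g (s, t)"
  using t
proof (induction k arbitrary: t)
  case 0
  then show ?case using f by simp
next
  case (Suc k)
  have "(s, t) \<in> W"
    using Suc.prems W by auto
  from has_vector_derivative_partial_t_iterate[OF g this]
  have "(vderiv T k f has_vector_derivative (partial_t ^^ Suc k) g (s, t)) (at t within {0..T})"
    using Suc by (rule_tac has_vector_derivative_transform[OF Suc.prems]) auto
  from vector_derivative_within_cbox[of 0 T t, unfolded cbox_interval, OF T Suc.prems this]
  show ?case
    by simp
qed

lemma variation_field_vanishes_at_fixed_end:
  fixes H :: "real \<times> real \<Rightarrow> 'c::banach"
  assumes H: "smooth_on W H" "open W" and T: "T > 0"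
    and S: "open S" "s \<in> S" "S \<times> {0..T} \<subseteq> W" and t: "t \<in> {0..T}"
    and fixed: "\<And>\<sigma>. \<sigma> \<in> S \<Longrightarrow> H (\<sigma>, t) = c \<and> vderiv T 1 (\<lambda>\<tau>. H (\<sigma>, \<tau>)) t = c'"
  shows "partial_s H (s, t) = 0" and "partial_t (partial_s H) (s, t) = 0"
proof -
  have W: "(s, t) \<in> W"
    using S t by auto
  show "partial_s H (s, t) = 0"
    using partial_s_eq_0_if_const[OF smooth_on_imp_differentiable[OF H(1) W] S(1,2) fixed[THEN conjunct1]] .
  have "partial_t H (\<sigma>, t) = c'" if "\<sigma> \<in> S" for \<sigma>
  proof -
    have "{\<sigma>} \<times> {0..T} \<subseteq> W"
      using S(3) that by auto
    from vderiv_eq_partial_t_iterate[OF H(1) T this, where f="\<lambda>\<tau>. H (\<sigma>, \<tau>)" and k=1] fixed[OF that] t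
    show ?thesis
      by simp
  qed
  then have "partial_s (partial_t H) (s, t) = 0"
    by (rule partial_s_eq_0_if_const[OF smooth_on_imp_differentiable[OF smooth_on_partial_t[OF H(1)] W] S(1,2)])
  then show "partial_t (partial_s H) (s, t) = 0"
    using partial_s_partial_t_commute[OF H W] by simp
qed

section \<open>The first variation of the action\<close>

definition lagrangian :: "(real^3 \<Rightarrow> real) \<Rightarrow> real^3 \<Rightarrow> real^3 \<Rightarrow> real" where
  "lagrangian V x a = 1/2 * (norm (proj x a))\<^sup>2 + V x"

definition proj_deriv :: "real^3 \<Rightarrow> real^3 \<Rightarrow> real^3 \<Rightarrow> real^3 \<Rightarrow> real^3" where
  "proj_deriv x x' w w' = w' - (x' \<bullet> w + x \<bullet> w') *\<^sub>R x - (x \<bullet> w) *\<^sub>R x'"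

lemma has_vector_derivative_proj:
  assumes "(x has_vector_derivative x') (at s within S)" and "(w has_vector_derivative w') (at s within S)"
  shows "((\<lambda>s. proj (x s) (w s)) has_vector_derivative proj_deriv (x s) x' (w s) w') (at s within S)"
  unfolding proj_def proj_deriv_def
  by (rule has_vector_derivative_eq_rhs[OF has_vector_derivative_diff[OF assms(2)
        has_vector_derivative_scaleR[OF has_real_derivative_inner[OF assms] assms(1)]]])
     (simp add: algebra_simps)

lemma has_real_derivative_lagrangian:
  assumes x: "(x has_vector_derivative x') (at s within S)" and a: "(a has_vector_derivative a') (at s within S)"
    and V: "(V has_derivative (\<lambda>h. gradV (x s) \<bullet> h)) (at (x s))"
  shows "((\<lambda>s. lagrangian V (x s) (a s)) has_real_derivative
      proj (x s) (a s) \<bullet> proj_deriv (x s) x' (a s) a' + gradV (x s) \<bullet> x') (at s within S)"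
proof -
  note dP = has_vector_derivative_proj[OF x a]
  show ?thesis
    using DERIV_add[OF DERIV_cmult[OF has_real_derivative_inner[OF dP dP], of "1/2"]
        has_real_derivative_compose_gradient[OF V x]]
    unfolding lagrangian_def power2_norm_eq_inner by (simp add: inner_commute algebra_simps)
qed

lemma has_real_derivative_action:
  fixes V :: "real^3 \<Rightarrow> real" and H :: "real \<times> real \<Rightarrow> real^3"
  assumes T: "T > 0"
    and V: "smooth_on U V" "\<And>x. x \<in> U \<Longrightarrow> (V has_derivative (\<lambda>h. gradV x \<bullet> h)) (at x)"
    and H: "smooth_on W H"
    and E: "open E" "convex E" "s \<in> E" "E \<times> {0..T} \<subseteq> W" "H ` (E \<times> {0..T}) \<subseteq> U"
  defines "Htt \<equiv> partial_t (partial_t H)"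
  shows "((\<lambda>\<sigma>. action V T (\<lambda>t. H (\<sigma>, t))) has_real_derivative
           integral {0..T} (\<lambda>t. proj (H (s, t)) (Htt (s, t)) \<bullet>
               proj_deriv (H (s, t)) (partial_s H (s, t)) (Htt (s, t)) (partial_s Htt (s, t))
             + gradV (H (s, t)) \<bullet> partial_s H (s, t))) (at s)"
proof -
  define L where "L z = lagrangian V (H z) (Htt z)" for z
  define L' where "L' z = proj (H z) (Htt z) \<bullet> proj_deriv (H z) (partial_s H z) (Htt z) (partial_s Htt z)
      + gradV (H z) \<bullet> partial_s H z" for z
  have smooth: "smooth_on W H" "smooth_on W (partial_s H)" "smooth_on W Htt" "smooth_on W (partial_s Htt)"
    using H unfolding Htt_def by (auto intro: smooth_on_partial_s smooth_on_partial_t)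
  then have cont: "continuous_on (E \<times> {0..T}) H" "continuous_on (E \<times> {0..T}) (partial_s H)"
      "continuous_on (E \<times> {0..T}) Htt" "continuous_on (E \<times> {0..T}) (partial_s Htt)"
    by (auto intro: continuous_on_subset[OF smooth_on_imp_continuous_on E(4)])
  have "continuous_on (E \<times> {0..T}) (\<lambda>z. V (H z))" "continuous_on (E \<times> {0..T}) (\<lambda>z. gradV (H z))"
    using continuous_on_compose2[OF smooth_on_imp_continuous_on[OF V(1)] cont(1) E(5)]
      continuous_on_compose2[OF continuous_on_gradient[OF V] cont(1) E(5)] .
  then have cont_L: "continuous_on (E \<times> {0..T}) L" and cont_L': "continuous_on (E \<times> {0..T}) L'"
    unfolding L_def L'_def lagrangian_def proj_def proj_deriv_def using cont by (auto intro!: continuous_intros)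
  have action: "action V T (\<lambda>t. H (\<sigma>, t)) = integral (cbox 0 T) (\<lambda>t. L (\<sigma>, t))" if "\<sigma> \<in> E" for \<sigma>
    unfolding action_def cbox_interval
  proof (rule integral_cong)
    fix t assume "t \<in> {0..T}"
    then have "vderiv T 2 (\<lambda>t. H (\<sigma>, t)) t = Htt (\<sigma>, t)"
      using vderiv_eq_partial_t_iterate[OF H T, where f="\<lambda>t. H (\<sigma>, t)" and s=\<sigma> and k=2] that E(4)
      by (auto simp: Htt_def numeral_2_eq_2)
    then show "1/2 * (norm (proj (H (\<sigma>, t)) (vderiv T 2 (\<lambda>t. H (\<sigma>, t)) t)))\<^sup>2 + V (H (\<sigma>, t)) = L (\<sigma>, t)"
      unfolding L_def lagrangian_def by simp
  qed
  have L': "((\<lambda>\<sigma>. L (\<sigma>, t)) has_real_derivative L' (\<sigma>, t)) (at \<sigma> within E)"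
    if "\<sigma> \<in> E" "t \<in> cbox 0 T" for \<sigma> t
  proof -
    have W: "(\<sigma>, t) \<in> W" and U: "H (\<sigma>, t) \<in> U"
      using that E(4,5) by auto
    have "((\<lambda>\<sigma>. H (\<sigma>, t)) has_vector_derivative partial_s H (\<sigma>, t)) (at \<sigma> within E)"
      using smooth_on_imp_differentiable[OF H W] by (rule has_vector_derivative_partial_s)
    moreover have "((\<lambda>\<sigma>. Htt (\<sigma>, t)) has_vector_derivative partial_s Htt (\<sigma>, t)) (at \<sigma> within E)"
      using smooth_on_imp_differentiable[OF smooth(3) W] by (rule has_vector_derivative_partial_s)
    ultimately show ?thesis
      unfolding L_def L'_def using V(2)[OF U] by (rule has_real_derivative_lagrangian)
  qed
  have "((\<lambda>\<sigma>. integral (cbox 0 T) (\<lambda>t. L (\<sigma>, t))) has_real_derivative integral (cbox 0 T) (\<lambda>t. L' (s, t)))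
      (at s within E)"
  proof (rule leibniz_rule_field_derivative[OF L'])
    show "(\<lambda>t. L (\<sigma>, t)) integrable_on cbox 0 T" if "\<sigma> \<in> E" for \<sigma>
      unfolding cbox_interval using that
      by (intro integrable_continuous_interval continuous_on_compose2[OF cont_L]) (auto intro!: continuous_intros)
    show "continuous_on (E \<times> cbox 0 T) (\<lambda>(\<sigma>, t). L' (\<sigma>, t))"
      using cont_L' by (simp add: cbox_interval)
  qed (use E in auto)
  then have "((\<lambda>\<sigma>. integral (cbox 0 T) (\<lambda>t. L (\<sigma>, t))) has_real_derivative integral {0..T} (\<lambda>t. L' (s, t)))
      (at s)"
    using at_within_open[OF E(3,1)] by (simp add: cbox_interval)
  from has_field_derivative_transform_within_open[OF this E(1,3)] action
  show ?thesis
    unfolding L'_def by simp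
qed

lemma euler_lagrange_integrand:
  fixes x a b c d y0 y2 G :: "real^3"
  assumes xx: "x \<bullet> x = 1" and xa: "x \<bullet> a = 0" and xb: "a \<bullet> a + x \<bullet> b = 0" and y0: "y0 \<bullet> x = 0"
    and EL: "proj x (d + (2 * (norm a)\<^sup>2) *\<^sub>R b + (4 * (a \<bullet> b)) *\<^sub>R a + ((norm b)\<^sup>2) *\<^sub>R x + G) = 0"
  shows "proj x b \<bullet> proj_deriv x y0 b y2 + G \<bullet> y0
       = (b + (a \<bullet> a) *\<^sub>R x) \<bullet> y2
         - (d + (2 * (b \<bullet> b + a \<bullet> c)) *\<^sub>R x + (4 * (a \<bullet> b)) *\<^sub>R a + (a \<bullet> a) *\<^sub>R b) \<bullet> y0"
proof -
  define Q where "Q = d + (2 * (norm a)\<^sup>2) *\<^sub>R b + (4 * (a \<bullet> b)) *\<^sub>R a + ((norm b)\<^sup>2) *\<^sub>R x + G"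
  \<comment> \<open>the Euler-Lagrange equation says that Q is normal to the sphere, so it is orthogonal to y0\<close>
  have "Q = (x \<bullet> Q) *\<^sub>R x"
    using EL unfolding proj_def Q_def[symmetric] by simp
  then have "Q \<bullet> y0 = 0"
    using y0 by (metis inner_commute inner_scaleR_left mult_zero_right)
  then have Qy0: "d \<bullet> y0 + 2 * (a \<bullet> a) * (b \<bullet> y0) + 4 * (a \<bullet> b) * (a \<bullet> y0) + G \<bullet> y0 = 0"
    using y0 unfolding Q_def
    by (simp add: inner_add_left power2_norm_eq_inner inner_commute algebra_simps)
  have bx: "b \<bullet> x = - (a \<bullet> a)"
    using xb by (simp add: inner_commute)
  show ?thesis
    using Qy0 xx y0 unfolding proj_def proj_deriv_def
    by (simp add: inner_add_left inner_add_right inner_diff_left inner_diff_right inner_commute bx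
        algebra_simps)
qed

lemma integral_first_variation_eq_0:
  fixes N y :: "nat \<Rightarrow> real \<Rightarrow> real^3" and gradV :: "real^3 \<Rightarrow> real^3"
  assumes T: "T > 0"
    and N: "\<And>k t. t \<in> {0..T} \<Longrightarrow> (N k has_vector_derivative N (Suc k) t) (at t within {0..T})"
    and y: "\<And>k t. t \<in> {0..T} \<Longrightarrow> (y k has_vector_derivative y (Suc k) t) (at t within {0..T})"
    and unit: "\<And>t. t \<in> {0..T} \<Longrightarrow> N 0 t \<bullet> N 0 t = 1"
    and tangent: "\<And>t. t \<in> {0..T} \<Longrightarrow> y 0 t \<bullet> N 0 t = 0"
    and ends: "\<And>t. t \<in> {0, T} \<Longrightarrow> y 0 t = 0 \<and> y 1 t = 0"
    and EL: "\<And>t. t \<in> {0..T} \<Longrightarrow> proj (N 0 t) (N 4 t + (2 * (norm (N 1 t))\<^sup>2) *\<^sub>R N 2 t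
      + (4 * (N 1 t \<bullet> N 2 t)) *\<^sub>R N 1 t + ((norm (N 2 t))\<^sup>2) *\<^sub>R N 0 t + gradV (N 0 t)) = 0"
  shows "integral {0..T} (\<lambda>t. proj (N 0 t) (N 2 t) \<bullet> proj_deriv (N 0 t) (y 0 t) (N 2 t) (y 2 t)
      + gradV (N 0 t) \<bullet> y 0 t) = 0"
proof -
  define A where "A = (\<lambda>t. N 2 t + (N 1 t \<bullet> N 1 t) *\<^sub>R N 0 t)"
  define A1 where "A1 = (\<lambda>t. N 3 t + (2 * (N 1 t \<bullet> N 2 t)) *\<^sub>R N 0 t + (N 1 t \<bullet> N 1 t) *\<^sub>R N 1 t)"
  define A2 where "A2 = (\<lambda>t. N 4 t + (2 * (N 2 t \<bullet> N 2 t + N 1 t \<bullet> N 3 t)) *\<^sub>R N 0 t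
      + (4 * (N 1 t \<bullet> N 2 t)) *\<^sub>R N 1 t + (N 1 t \<bullet> N 1 t) *\<^sub>R N 2 t)"
  have A: "(A has_vector_derivative A1 t) (at t within {0..T})" "(A1 has_vector_derivative A2 t) (at t within {0..T})"
    if "t \<in> {0..T}" for t
    unfolding A_def A1_def A2_def using has_vector_derivative_covariant_acceleration[where N=N, OF N[OF that]] .
  have integrand: "proj (N 0 t) (N 2 t) \<bullet> proj_deriv (N 0 t) (y 0 t) (N 2 t) (y 2 t) + gradV (N 0 t) \<bullet> y 0 t
      = A t \<bullet> y 2 t - A2 t \<bullet> y 0 t" if "t \<in> {0..T}" for t
    unfolding A_def A2_def
    using euler_lagrange_integrand[OF unit[OF that] unit_curve_inner_derivatives[OF T N unit that]
        tangent[OF that] EL[OF that]] .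
  have "((\<lambda>t. A t \<bullet> y 2 t - A2 t \<bullet> y 0 t) has_integral
      (A T \<bullet> y 1 T - A1 T \<bullet> y 0 T) - (A 0 \<bullet> y 1 0 - A1 0 \<bullet> y 0 0)) {0..T}"
    using has_integral_inner_second_derivatives[OF _ A y[where k=0] y[where k="Suc 0"]] T
    by (simp add: numeral_2_eq_2)
  then have "((\<lambda>t. A t \<bullet> y 2 t - A2 t \<bullet> y 0 t) has_integral 0) {0..T}"
    using ends[of 0] ends[of T] by simp
  then show ?thesis
    by (subst integral_cong[OF integrand]) (auto intro: integral_unique)
qed

lemma action_first_variation_eq_0:
  fixes V :: "real^3 \<Rightarrow> real" and gradV :: "real^3 \<Rightarrow> real^3"
    and n :: "real \<Rightarrow> real^3" and H :: "real \<times> real \<Rightarrow> real^3"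
  assumes T: "T > 0"
    and V: "smooth_on U V" "\<And>x. x \<in> U \<Longrightarrow> (V has_derivative (\<lambda>h. gradV x \<bullet> h)) (at x)"
    and U: "sphere 0 1 \<subseteq> U"
    and EL: "\<And>t. t \<in> {0..T} \<Longrightarrow> proj (n t)
           (vderiv T 4 n t + (2 * (norm (vderiv T 1 n t))\<^sup>2) *\<^sub>R vderiv T 2 n t
            + (4 * (vderiv T 1 n t \<bullet> vderiv T 2 n t)) *\<^sub>R vderiv T 1 n t
            + ((norm (vderiv T 2 n t))\<^sup>2) *\<^sub>R n t + gradV (n t)) = 0"
    and H: "smooth_on W H" "open W"
    and E: "open E" "convex E" "0 \<in> E" "E \<times> {0..T} \<subseteq> W"
    and sphere: "\<And>s t. s \<in> E \<Longrightarrow> t \<in> {0..T} \<Longrightarrow> H (s, t) \<in> sphere 0 1"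
    and n: "\<And>t. t \<in> {0..T} \<Longrightarrow> H (0, t) = n t"
    and ends: "\<And>s t. s \<in> E \<Longrightarrow> t \<in> {0, T} \<Longrightarrow>
      H (s, t) = n t \<and> vderiv T 1 (\<lambda>t. H (s, t)) t = vderiv T 1 n t"
  shows "((\<lambda>s. action V T (\<lambda>t. H (s, t))) has_real_derivative 0) (at 0)"
proof -
  define N where "N k t = (partial_t ^^ k) H (0, t)" for k t
  define y where "y k t = (partial_t ^^ k) (partial_s H) (0, t)" for k t
  have W: "(s, t) \<in> W" if "s \<in> E" "t \<in> {0..T}" for s t
    using E(4) that by auto
  have line: "{0} \<times> {0..T} \<subseteq> W"
    using W E(3) by auto
  have N': "(N k has_vector_derivative N (Suc k) t) (at t within {0..T})" if "t \<in> {0..T}" for k t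
    unfolding N_def by (rule has_vector_derivative_partial_t_iterate[OF H(1) W[OF E(3) that]])
  have y': "(y k has_vector_derivative y (Suc k) t) (at t within {0..T})" if "t \<in> {0..T}" for k t
    unfolding y_def by (rule has_vector_derivative_partial_t_iterate[OF smooth_on_partial_s[OF H(1)] W[OF E(3) that]])
  have vderiv_n: "vderiv T k n t = N k t" if "t \<in> {0..T}" for k t
    using vderiv_eq_partial_t_iterate[OF H(1) T line, where f=n] n that
    unfolding N_def by simp
  have unit: "H (s, t) \<bullet> H (s, t) = 1" if "s \<in> E" "t \<in> {0..T}" for s t
    using sphere[OF that] by (simp add: dot_square_norm)
  have tangent: "y 0 t \<bullet> N 0 t = 0" if "t \<in> {0..T}" for t
    using inner_partial_s_eq_0_if_unit[OF smooth_on_imp_differentiable[OF H(1) W[OF E(3) that]] E(1,3)]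
      unit that unfolding y_def N_def by (simp add: inner_commute)
  have y_ends: "y 0 t = 0 \<and> y 1 t = 0" if t: "t \<in> {0, T}" for t
    using variation_field_vanishes_at_fixed_end[OF H T E(1,3,4) _ ends[OF _ t]] T t unfolding y_def by auto
  have HU: "H ` (E \<times> {0..T}) \<subseteq> U"
    using sphere U by auto
  define dL where "dL t = proj (H (0, t)) (partial_t (partial_t H) (0, t)) \<bullet> proj_deriv (H (0, t))
      (partial_s H (0, t)) (partial_t (partial_t H) (0, t)) (partial_s (partial_t (partial_t H)) (0, t))
    + gradV (H (0, t)) \<bullet> partial_s H (0, t)" for t
  have "((\<lambda>s. action V T (\<lambda>t. H (s, t))) has_real_derivative integral {0..T} dL) (at 0)"
    unfolding dL_def by (rule has_real_derivative_action[OF T V(1) _ H(1) E HU]) (rule V(2))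
  moreover have "integral {0..T} dL = integral {0..T} (\<lambda>t. proj (N 0 t) (N 2 t) \<bullet>
      proj_deriv (N 0 t) (y 0 t) (N 2 t) (y 2 t) + gradV (N 0 t) \<bullet> y 0 t)"
  proof (rule integral_cong)
    fix t assume "t \<in> {0..T}"
    from partial_s_partial_t_partial_t_commute[OF H W[OF E(3) this]]
    show "dL t = proj (N 0 t) (N 2 t) \<bullet> proj_deriv (N 0 t) (y 0 t) (N 2 t) (y 2 t) + gradV (N 0 t) \<bullet> y 0 t"
      unfolding dL_def N_def y_def by (simp add: numeral_2_eq_2)
  qed
  moreover have "\<dots> = 0"
  proof (rule integral_first_variation_eq_0[OF T N' y' _ tangent y_ends])
    show "N 0 t \<bullet> N 0 t = 1" if "t \<in> {0..T}" for t
      using unit[OF E(3) that] unfolding N_def by simp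
    show "proj (N 0 t) (N 4 t + (2 * (norm (N 1 t))\<^sup>2) *\<^sub>R N 2 t + (4 * (N 1 t \<bullet> N 2 t)) *\<^sub>R N 1 t
        + ((norm (N 2 t))\<^sup>2) *\<^sub>R N 0 t + gradV (N 0 t)) = 0" if "t \<in> {0..T}" for t
      using EL[OF that] n[OF that] unfolding vderiv_n[OF that] N_def by simp
  qed
  ultimately show ?thesis
    by simp
qed

theorem mainTheorem2:
  fixes V :: "real^3 \<Rightarrow> real" and gradV :: "real^3 \<Rightarrow> real^3"
    and U :: "(real^3) set" and T :: real and n :: "real \<Rightarrow> real^3"
  assumes "T > 0"
    and "open U" and "sphere 0 1 \<subseteq> U" and "smooth_on U V"
    and "\<forall>x\<in>U. (V has_derivative (\<lambda>h. gradV x \<bullet> h)) (at x)"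
    and "smooth_curve T n"
    and "\<forall>t\<in>{0..T}. n t \<in> sphere 0 1"
    and "\<forall>t\<in>{0..T}. proj (n t)
           (vderiv T 4 n t + (2 * (norm (vderiv T 1 n t))\<^sup>2) *\<^sub>R vderiv T 2 n t
            + (4 * (vderiv T 1 n t \<bullet> vderiv T 2 n t)) *\<^sub>R vderiv T 1 n t
            + ((norm (vderiv T 2 n t))\<^sup>2) *\<^sub>R n t + gradV (n t)) = 0"
  shows "qrc_oa V T n"
  unfolding qrc_oa_def
proof (intro conjI allI impI)
  show "smooth_curve T n" and "\<forall>t\<in>{0..T}. n t \<in> sphere 0 1"
    using assms(6,7) .
  fix H :: "real \<times> real \<Rightarrow> real^3" and W e
  assume "open W \<and> e > 0 \<and> {-e<..<e} \<times> {0..T} \<subseteq> W \<and> smooth_on W H \<and>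
        (\<forall>s\<in>{-e<..<e}. \<forall>t\<in>{0..T}. H (s, t) \<in> sphere 0 1) \<and>
        (\<forall>t\<in>{0..T}. H (0, t) = n t) \<and>
        (\<forall>s\<in>{-e<..<e}. H (s, 0) = n 0 \<and> H (s, T) = n T \<and>
            vderiv T 1 (\<lambda>t. H (s, t)) 0 = vderiv T 1 n 0 \<and>
            vderiv T 1 (\<lambda>t. H (s, t)) T = vderiv T 1 n T)"
  then show "((\<lambda>s. action V T (\<lambda>t. H (s, t))) has_real_derivative 0) (at 0)"
    using assms by (intro action_first_variation_eq_0[where E="{-e<..<e}" and W=W]) auto
qed

end
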